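(* Let $D\subset\mathbb{R}^2$ be a domain with bounded Lipschitz boundary $\partial D$, let $k>0$, $\Phi_k(\mathbf x,\mathbf y)=\frac{\mathrm i}{4}H^{(1)}_0(k|\mathbf x-\mathbf y|)$, and let $S_k:L^2(\partial D)\to C^2(D)$ be the single layer potential $S_k\varphi(\mathbf x)=\int_{\partial D}\Phi_k(\mathbf x,\mathbf y)\varphi(\mathbf y)\,\mathrm ds(\mathbf y)$, $\mathbf x\in D$. Given $k_0>0$, there is a constant $C>0$ depending only on $\partial D$ such that $$\|S_k\|_{L^2(\partial D)\to L^\infty(D)}\le C\,k^{-1/2}\log^{1/2}\big(1+k\,\mathrm{diam}(\partial D)\big),\qquad k\ge k_0.$$
   Context: $H^{(1)}_0$ is the Hankel function of the first kind of order zero. *)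

theory Defs
  imports "HOL-Analysis.Analysis"
begin

definition bessel_J0 :: "real \<Rightarrow> real" where
  "bessel_J0 x = (\<Sum>m. (-1) ^ m * (x / 2) ^ (2 * m) / (fact m) ^ 2)"

text \<open>Y_0(x) = (2/pi)(ln(x/2) + gamma) J_0(x) + (2/pi) sum_{m>=1} (-1)^(m+1) H_m (x/2)^(2m) / (m!)^2
  (the m = 0 term vanishes since harm 0 = 0).\<close>
definition bessel_Y0 :: "real \<Rightarrow> real" where
  "bessel_Y0 x = 2 / pi * (ln (x / 2) + euler_mascheroni) * bessel_J0 x
     + 2 / pi * (\<Sum>m. (-1) ^ (m + 1) * harm m * (x / 2) ^ (2 * m) / (fact m) ^ 2)"

definition hankel1_0 :: "real \<Rightarrow> complex" where
  "hankel1_0 x = Complex (bessel_J0 x) (bessel_Y0 x)"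

definition Phi :: "real \<Rightarrow> real^2 \<Rightarrow> real^2 \<Rightarrow> complex" where
  "Phi k x y = (\<i> / 4) * hankel1_0 (k * norm (x - y))"

definition lipschitz_boundary :: "(real^2) set \<Rightarrow> bool" where
  "lipschitz_boundary D \<longleftrightarrow>
     (\<forall>p \<in> frontier D. \<exists>Q g L U.
        orthogonal_transformation (Q :: real^2 \<Rightarrow> real^2) \<and>
        (L::real)-lipschitz_on UNIV (g :: real \<Rightarrow> real) \<and> open U \<and> p \<in> U \<and>
        D \<inter> U = {x \<in> U. Q (x - p) $ 2 < g (Q (x - p) $ 1)})"

definition hausdorff1_outer :: "'a::metric_space set \<Rightarrow> ennreal" where
  "hausdorff1_outer A =
     (SUP \<delta>\<in>{0::real<..}. INF C \<in> {C :: nat \<Rightarrow> 'a set.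
        A \<subseteq> (\<Union>i. C i) \<and> (\<forall>i. bounded (C i) \<and> diameter (C i) \<le> \<delta>)}.
        (\<Sum>i. ennreal (diameter (C i))))"

definition bdry_measure :: "(real^2) set \<Rightarrow> (real^2) measure" where
  "bdry_measure D = measure_of (frontier D) (sets (restrict_space borel (frontier D))) hausdorff1_outer"

definition single_layer :: "(real^2) set \<Rightarrow> real \<Rightarrow> (real^2 \<Rightarrow> complex) \<Rightarrow> real^2 \<Rightarrow> complex" where
  "single_layer D k \<phi> x = (LINT y|bdry_measure D. Phi k x y * \<phi> y)"

definition L2_norm_bdry :: "(real^2) set \<Rightarrow> (real^2 \<Rightarrow> complex) \<Rightarrow> real" where
  "L2_norm_bdry D \<phi> = sqrt (LINT y|bdry_measure D. (cmod (\<phi> y))\<^sup>2)"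

definition in_L2_bdry :: "(real^2) set \<Rightarrow> (real^2 \<Rightarrow> complex) \<Rightarrow> bool" where
  "in_L2_bdry D \<phi> \<longleftrightarrow> \<phi> \<in> borel_measurable (bdry_measure D) \<and>
     integrable (bdry_measure D) (\<lambda>y. (cmod (\<phi> y))\<^sup>2)"

end

theory Submission
  imports Defs
begin

text \<open>For \<open>0 < t \<le> 1\<close> the series give \<open>|H(t)|\<^sup>2 \<le> A / sqrt t\<close>, the logarithm in \<open>Y\<^sub>0\<close> being
  dominated by \<open>t powr (-1/4)\<close>; for \<open>t \<ge> 1\<close>, \<open>J\<^sub>0\<close> and \<open>Y\<^sub>0\<close> solve Bessel's equation, along which an
  energy dominating \<open>t y\<^sup>2\<close> decreases, so \<open>|H(t)|\<^sup>2 \<le> B / t\<close>. Since a Lipschitz boundary \<open>\<Gamma>\<close> is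
  locally a Lipschitz graph, its arc length satisfies \<open>|\<Gamma> \<inter> ball x r| \<le> c r\<close>. Splitting \<open>\<Gamma>\<close> into
  dyadic shells around \<open>x\<close>, the shells with \<open>k |x - y| \<le> 1\<close> contribute a geometric series of total
  size \<open>O(1/k)\<close> to \<open>\<integral> |\<Phi>\<^sub>k(x,y)|\<^sup>2 ds(y)\<close>, and each of the \<open>O(log (1 + k diam \<Gamma>))\<close> remaining shells
  contributes \<open>O(1/k)\<close>. Cauchy-Schwarz turns this \<open>L\<^sup>2\<close> bound on the kernel into the claim.\<close>

section \<open>Bessel functions of order zero\<close>

lemma harm_le_self: "harm n \<le> real n"
proof -
  have "harm n = (\<Sum>k=1..n. inverse (real k))" by (simp add: harm_def)
  also have "\<dots> \<le> (\<Sum>k=1..n. 1)" by (intro sum_mono) (auto simp: inverse_le_1_iff)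
  finally show ?thesis by simp
qed

lemma four_power_eq: "(4::real)^m = (2^m)^2"
  by (simp add: power2_eq_square power_mult_distrib[symmetric])

lemma sums_even_iff:
  fixes c :: "nat \<Rightarrow> real"
  assumes "\<And>n. odd n \<Longrightarrow> c n = 0"
  shows "(\<lambda>m. c (2*m) * x^(2*m)) sums s \<longleftrightarrow> (\<lambda>n. c n * x^n) sums s"
proof -
  have "strict_mono (\<lambda>m::nat. 2*m)" by (auto simp: strict_mono_def)
  from sums_mono_reindex[OF this, of "\<lambda>n. c n * x^n" s] show ?thesis
    using assms by (metis (no_types, lifting) evenE mult_eq_0_iff rangeI)
qed

lemma conv_radius_even_eq_infinity:
  fixes c :: "nat \<Rightarrow> real"
  assumes odd: "\<And>n. odd n \<Longrightarrow> c n = 0"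
    and even: "\<And>m. \<bar>c (2*m)\<bar> \<le> inverse (fact m) / 4^m"
  shows "conv_radius c = \<infinity>"
proof -
  have "conv_radius c \<ge> \<infinity>"
  proof (rule conv_radius_geI_ex')
    fix r :: real assume r: "0 < r"
    have "summable (\<lambda>m. c (2*m) * r^(2*m))"
    proof (rule summable_comparison_test'[OF summable_exp[of "r^2/4"]])
      fix m :: nat
      have "norm (c (2*m) * r^(2*m)) = \<bar>c (2*m)\<bar> * (r^2)^m"
        using r by (simp add: abs_mult power_mult)
      also have "\<dots> \<le> inverse (fact m) / 4^m * (r^2)^m"
        by (intro mult_right_mono even) auto
      finally show "norm (c (2*m) * r^(2*m)) \<le> inverse (fact m) * (r^2/4)^m"
        by (simp add: power_divide)
    qed
    then show "summable (\<lambda>n. c n * (of_real r)^n)"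
      using sums_even_iff[of c] odd unfolding summable_def by auto
  qed
  then show ?thesis by (simp add: top.extremum_unique)
qed

lemma fps_conv_radius_deriv_eq_infinity:
  "fps_conv_radius (f :: real fps) = \<infinity> \<Longrightarrow> fps_conv_radius (fps_deriv f) = \<infinity>"
  using fps_conv_radius_deriv[of f] by (simp add: top.extremum_unique)

lemma has_real_derivative_eval_fps_infinity:
  "fps_conv_radius (f :: real fps) = \<infinity> \<Longrightarrow>
     (eval_fps f has_real_derivative eval_fps (fps_deriv f) x) (at x)"
  by (rule has_field_derivative_eval_fps) simp

abbreviation bessel_operator :: "real fps \<Rightarrow> real fps" where
  "bessel_operator f \<equiv> fps_X * fps_deriv (fps_deriv f) + fps_deriv f + fps_X * f"

lemma fps_nth_bessel_operator:
  "fps_nth (bessel_operator f) 0 = fps_nth f 1"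
  "fps_nth (bessel_operator f) (Suc j) = real ((j+2)^2) * fps_nth f (j+2) + fps_nth f j"
  by (simp_all add: fps_X_mult_nth algebra_simps power2_eq_square)

lemma eval_fps_bessel_operator:
  assumes f: "fps_conv_radius f = \<infinity>"
  shows "eval_fps (bessel_operator f) x
    = x * eval_fps (fps_deriv (fps_deriv f)) x + eval_fps (fps_deriv f) x + x * eval_fps f x"
proof -
  have f1: "fps_conv_radius (fps_deriv f) = \<infinity>"
    and f2: "fps_conv_radius (fps_deriv (fps_deriv f)) = \<infinity>"
    using f by (simp_all add: fps_conv_radius_deriv_eq_infinity)
  have inf: "fps_conv_radius (g * h) = \<infinity>" "fps_conv_radius (g + h) = \<infinity>"
    if "fps_conv_radius g = \<infinity>" "fps_conv_radius h = \<infinity>" for g h :: "real fps"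
    using that fps_conv_radius_mult[of g h] fps_conv_radius_add[of g h]
    by (simp_all add: top.extremum_unique)
  show ?thesis
    using f f1 f2 by (simp add: eval_fps_add eval_fps_mult inf)
qed

text \<open>The energy \<open>E\<close> below is a Lyapunov function for the Bessel equation \<open>y'' + y'/t + y = 0\<close>:
  its derivative is \<open>-y\<^sup>2/(2t\<^sup>2) \<le> 0\<close>, and it dominates \<open>t y\<^sup>2\<close>.\<close>

lemma bessel_ode_solution_decay:
  fixes y y' :: "real \<Rightarrow> real"
  assumes y: "\<And>t. t > 0 \<Longrightarrow> (y has_real_derivative y' t) (at t)"
    and y': "\<And>t. t > 0 \<Longrightarrow> (y' has_real_derivative (- y' t / t - y t)) (at t)"
  shows "\<exists>B. \<forall>t\<ge>1. t * (y t)^2 \<le> B"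
proof -
  define E where "E t = (y t + 2*t*y' t)^2/(4*t) + t*(y t)^2 + (y t)^2/(4*t)" for t
  have dE: "(E has_real_derivative (-((y t)^2) / (2 * t^2))) (at t)" if t: "t > 0" for t
    unfolding E_def using t
    by (auto intro!: derivative_eq_intros y y' simp: field_simps power2_eq_square)
  have "t * (y t)^2 \<le> E 1" if t: "t \<ge> 1" for t
  proof -
    have "E t \<le> E 1"
    proof (rule DERIV_nonpos_imp_nonincreasing[OF t])
      fix s :: real assume "1 \<le> s"
      then show "\<exists>d. DERIV E s :> d \<and> d \<le> 0"
        using dE[of s] by (intro exI[of _ "-((y s)^2) / (2 * s^2)"]) (auto simp: divide_nonneg_nonneg)
    qed
    moreover have "t * (y t)^2 \<le> E t" using t unfolding E_def by auto
    ultimately show ?thesis by linarith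
  qed
  then show ?thesis by blast
qed

lemma ln_sq_le_inverse_sqrt: "0 < (t :: real) \<Longrightarrow> t \<le> 1 \<Longrightarrow> (ln t)^2 \<le> 16 / sqrt t"
proof -
  assume t: "0 < t" "t \<le> 1"
  define s where "s = t powr (-1/4)"
  have s: "s > 0" using t by (simp add: s_def)
  have "- ln t = 4 * ln s" using t by (simp add: s_def ln_powr)
  also have "\<dots> \<le> 4 * s" using ln_less_self[OF s] by simp
  finally have "(- ln t)^2 \<le> (4 * s)^2" using t by (intro power_mono) auto
  also have "s^2 = 1 / sqrt t" using t
    by (simp add: s_def sqrt_def powr_powr[symmetric] power2_eq_square flip: powr_add)
      (simp add: powr_minus_divide root_powr_inverse)
  ultimately show ?thesis by (simp add: power_mult_distrib)
qed

definition J0_coeff :: "nat \<Rightarrow> real" where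
  "J0_coeff n = (if even n then (-1)^(n div 2) / (4^(n div 2) * (fact (n div 2))^2) else 0)"

definition Y0_series_coeff :: "nat \<Rightarrow> real" where
  "Y0_series_coeff n =
     (if even n then (-1)^(n div 2 + 1) * harm (n div 2) / (4^(n div 2) * (fact (n div 2))^2) else 0)"

definition J0_fps :: "real fps" where "J0_fps = Abs_fps J0_coeff"

definition Y0_series_fps :: "real fps" where "Y0_series_fps = Abs_fps Y0_series_coeff"

lemma J0_coeff_recurrence: "real ((2*i+2)^2) * J0_coeff (2*i+2) + J0_coeff (2*i) = 0"
proof -
  define a where "a = real i + 1"
  have pos: "a > 0" "(fact i :: real) > 0" by (auto simp: a_def)
  have e: "real ((2*i+2)^2) = 4 * a^2"
    "J0_coeff (2*i+2) = (-1)^(i+1) / (4^(i+1) * (a * fact i)^2)"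
    "J0_coeff (2*i) = (-1)^i / (4^i * (fact i)^2)"
    by (simp_all add: J0_coeff_def a_def algebra_simps power2_eq_square)
  show ?thesis unfolding e using pos by (simp add: field_simps power2_eq_square)
qed

lemma Y0_series_coeff_recurrence:
  "real ((2*i+2)^2) * Y0_series_coeff (2*i+2) + Y0_series_coeff (2*i)
     = - 2 * (real (2*i+2) * J0_coeff (2*i+2))"
proof -
  define a where "a = real i + 1"
  have pos: "a > 0" "(fact i :: real) > 0" by (auto simp: a_def)
  have e: "real ((2*i+2)^2) = 4 * a^2" "real (2*i+2) = 2 * a"
    "Y0_series_coeff (2*i+2) = (-1)^(i+2) * (harm i + inverse a) / (4^(i+1) * (a * fact i)^2)"
    "Y0_series_coeff (2*i) = (-1)^(i+1) * harm i / (4^i * (fact i)^2)"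
    "J0_coeff (2*i+2) = (-1)^(i+1) / (4^(i+1) * (a * fact i)^2)"
    by (simp_all add: Y0_series_coeff_def J0_coeff_def a_def harm_Suc algebra_simps power2_eq_square)
  show ?thesis unfolding e using pos by (simp add: field_simps power2_eq_square)
qed

lemma fps_conv_radius_J0_fps: "fps_conv_radius J0_fps = \<infinity>"
proof -
  have "\<bar>J0_coeff (2*m)\<bar> \<le> inverse (fact m) / 4^m" for m
  proof -
    have "(fact m :: real) \<le> (fact m)^2" by (simp add: power2_eq_square)
    then show ?thesis by (simp add: J0_coeff_def abs_mult field_simps)
  qed
  then show ?thesis
    unfolding fps_conv_radius_def J0_fps_def
    by (simp add: conv_radius_even_eq_infinity J0_coeff_def)
qed

lemma fps_conv_radius_Y0_series_fps: "fps_conv_radius Y0_series_fps = \<infinity>"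
proof -
  have "\<bar>Y0_series_coeff (2*m)\<bar> \<le> inverse (fact m) / 4^m" for m
  proof -
    have "harm m \<le> (fact m :: real)"
      using harm_le_self[of m] fact_ge_self[of m] by (metis of_nat_fact of_nat_mono order.trans)
    then have "harm m * fact m \<le> (fact m :: real)^2"
      by (simp add: power2_eq_square mult_right_mono)
    then show ?thesis by (simp add: Y0_series_coeff_def abs_mult harm_nonneg field_simps)
  qed
  then show ?thesis
    unfolding fps_conv_radius_def Y0_series_fps_def
    by (simp add: conv_radius_even_eq_infinity Y0_series_coeff_def)
qed

lemma bessel_J0_eq_eval_fps: "bessel_J0 x = eval_fps J0_fps x"
proof -
  have "(\<lambda>n. J0_coeff n * x^n) sums eval_fps J0_fps x"
    using sums_eval_fps[of x J0_fps] fps_conv_radius_J0_fps by (simp add: J0_fps_def)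
  then have "(\<lambda>m. J0_coeff (2*m) * x^(2*m)) sums eval_fps J0_fps x"
    using sums_even_iff[of J0_coeff] by (simp add: J0_coeff_def)
  moreover have "J0_coeff (2*m) * x^(2*m) = (-1) ^ m * (x / 2) ^ (2 * m) / (fact m) ^ 2" for m
    by (simp add: J0_coeff_def power_mult power_divide field_simps four_power_eq)
  ultimately show ?thesis unfolding bessel_J0_def by (simp add: sums_iff)
qed

lemma Y0_series_eq_eval_fps:
  "(\<Sum>m. (-1) ^ (m + 1) * harm m * (x / 2) ^ (2 * m) / (fact m) ^ 2) = eval_fps Y0_series_fps x"
proof -
  have "(\<lambda>n. Y0_series_coeff n * x^n) sums eval_fps Y0_series_fps x"
    using sums_eval_fps[of x Y0_series_fps] fps_conv_radius_Y0_series_fps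
    by (simp add: Y0_series_fps_def)
  then have "(\<lambda>m. Y0_series_coeff (2*m) * x^(2*m)) sums eval_fps Y0_series_fps x"
    using sums_even_iff[of Y0_series_coeff] by (simp add: Y0_series_coeff_def)
  moreover have "Y0_series_coeff (2*m) * x^(2*m) = (-1) ^ (m + 1) * harm m * (x / 2) ^ (2 * m) / (fact m) ^ 2"
    for m by (simp add: Y0_series_coeff_def power_mult power_divide field_simps four_power_eq)
  ultimately show ?thesis by (simp add: sums_iff)
qed

lemma bessel_Y0_eq_eval_fps:
  "bessel_Y0 x = 2 / pi * (ln (x / 2) + euler_mascheroni) * eval_fps J0_fps x
     + 2 / pi * eval_fps Y0_series_fps x"
  by (simp only: bessel_Y0_def bessel_J0_eq_eval_fps Y0_series_eq_eval_fps)

lemma J0_fps_bessel_ode: "bessel_operator J0_fps = 0"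
proof (rule fps_ext)
  fix n
  show "fps_nth (bessel_operator J0_fps) n = fps_nth 0 n"
  proof (cases n)
    case (Suc j)
    then have "fps_nth (bessel_operator J0_fps) n = real ((j+2)^2) * J0_coeff (j+2) + J0_coeff j"
      by (simp add: fps_nth_bessel_operator J0_fps_def algebra_simps power2_eq_square)
    moreover have "real ((j+2)^2) * J0_coeff (j+2) + J0_coeff j = 0"
      using J0_coeff_recurrence by (cases "even j") (auto simp: J0_coeff_def add.commute elim!: evenE)
    ultimately show ?thesis by simp
  qed (simp add: fps_nth_bessel_operator J0_fps_def J0_coeff_def)
qed

lemma Y0_series_fps_bessel_ode:
  "bessel_operator Y0_series_fps = fps_const (-2) * fps_deriv J0_fps"
proof (rule fps_ext)
  fix n
  show "fps_nth (bessel_operator Y0_series_fps) n = fps_nth (fps_const (-2) * fps_deriv J0_fps) n"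
  proof (cases n)
    case (Suc j)
    then have "fps_nth (bessel_operator Y0_series_fps) n
        = real ((j+2)^2) * Y0_series_coeff (j+2) + Y0_series_coeff j"
      and "fps_nth (fps_const (-2) * fps_deriv J0_fps) n = - 2 * (real (j+2) * J0_coeff (j+2))"
      by (simp_all add: fps_nth_bessel_operator Y0_series_fps_def J0_fps_def algebra_simps power2_eq_square)
    moreover have "real ((j+2)^2) * Y0_series_coeff (j+2) + Y0_series_coeff j
        = - 2 * (real (j+2) * J0_coeff (j+2))"
      using Y0_series_coeff_recurrence
      by (cases "even j") (auto simp: Y0_series_coeff_def J0_coeff_def add.commute elim!: evenE)
    ultimately show ?thesis by simp
  qed (simp add: fps_nth_bessel_operator Y0_series_fps_def Y0_series_coeff_def J0_fps_def J0_coeff_def)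
qed

lemma J0_eval_bessel_ode:
  "x * eval_fps (fps_deriv (fps_deriv J0_fps)) x + eval_fps (fps_deriv J0_fps) x + x * eval_fps J0_fps x = 0"
  using eval_fps_bessel_operator[OF fps_conv_radius_J0_fps, of x] J0_fps_bessel_ode by simp

lemma Y0_series_eval_bessel_ode:
  "x * eval_fps (fps_deriv (fps_deriv Y0_series_fps)) x + eval_fps (fps_deriv Y0_series_fps) x
     + x * eval_fps Y0_series_fps x = -2 * eval_fps (fps_deriv J0_fps) x"
  using eval_fps_bessel_operator[OF fps_conv_radius_Y0_series_fps, of x] Y0_series_fps_bessel_ode
  by (simp add: eval_fps_mult fps_conv_radius_deriv_eq_infinity fps_conv_radius_J0_fps)

lemma bessel_J0_decay: "\<exists>B. \<forall>t\<ge>1. t * (bessel_J0 t)^2 \<le> B"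
proof -
  let ?J = "eval_fps J0_fps" and ?J' = "eval_fps (fps_deriv J0_fps)"
  have "(?J' has_real_derivative - ?J' t / t - ?J t) (at t)" if "t > 0" for t
  proof -
    have "eval_fps (fps_deriv (fps_deriv J0_fps)) t = - ?J' t / t - ?J t"
      using J0_eval_bessel_ode[of t] that by (simp add: field_simps)
    then show ?thesis
      using has_real_derivative_eval_fps_infinity[of "fps_deriv J0_fps" t]
      by (simp add: fps_conv_radius_deriv_eq_infinity fps_conv_radius_J0_fps)
  qed
  then have "\<exists>B. \<forall>t\<ge>1. t * (?J t)^2 \<le> B"
    using has_real_derivative_eval_fps_infinity[OF fps_conv_radius_J0_fps]
    by (intro bessel_ode_solution_decay)
  then show ?thesis by (simp add: bessel_J0_eq_eval_fps)
qed

lemma bessel_Y0_decay: "\<exists>B. \<forall>t\<ge>1. t * (bessel_Y0 t)^2 \<le> B"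
proof -
  define J J' J'' where "J = eval_fps J0_fps" and "J' = eval_fps (fps_deriv J0_fps)"
    and "J'' = eval_fps (fps_deriv (fps_deriv J0_fps))"
  define S S' S'' where "S = eval_fps Y0_series_fps" and "S' = eval_fps (fps_deriv Y0_series_fps)"
    and "S'' = eval_fps (fps_deriv (fps_deriv Y0_series_fps))"
  define lg where "lg t = ln (t/2) + euler_mascheroni" for t :: real
  define y where "y t = 2/pi * (lg t * J t + S t)" for t
  define y' where "y' t = 2/pi * (J t / t + lg t * J' t + S' t)" for t
  have rad: "fps_conv_radius J0_fps = \<infinity>" "fps_conv_radius (fps_deriv J0_fps) = \<infinity>"
    "fps_conv_radius Y0_series_fps = \<infinity>" "fps_conv_radius (fps_deriv Y0_series_fps) = \<infinity>"
    by (simp_all add: fps_conv_radius_deriv_eq_infinity fps_conv_radius_J0_fps fps_conv_radius_Y0_series_fps)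
  note deriv = rad[THEN has_real_derivative_eval_fps_infinity]
  \<comment> \<open>The inhomogeneity \<open>-2 J\<^sub>0'\<close> of the series part cancels against the logarithmic term.\<close>
  have "\<exists>B. \<forall>t\<ge>1. t * (y t)^2 \<le> B"
  proof (rule bessel_ode_solution_decay)
    fix t :: real assume t: "t > 0"
    show "(y has_real_derivative y' t) (at t)"
      unfolding y_def y'_def lg_def J_def J'_def S_def S'_def using t
      by (auto intro!: derivative_eq_intros deriv simp: field_simps)
    have "(y' has_real_derivative 2/pi * ((J' t * t - J t) / t^2 + J' t / t + lg t * J'' t + S'' t)) (at t)"
      unfolding y'_def lg_def J_def J'_def J''_def S'_def S''_def using t
      by (auto intro!: derivative_eq_intros deriv simp: field_simps power2_eq_square)
    moreover have ode: "J'' t = - J' t / t - J t" "S'' t = (-2 * J' t - S' t) / t - S t"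
      using J0_eval_bessel_ode[of t] Y0_series_eval_bessel_ode[of t] t
      by (simp_all add: J_def J'_def J''_def S_def S'_def S''_def field_simps)
    moreover have "2/pi * ((J' t * t - J t) / t^2 + J' t / t + lg t * J'' t + S'' t) = - y' t / t - y t"
      unfolding y_def y'_def ode using t by (simp add: field_simps power2_eq_square)
    ultimately show "(y' has_real_derivative - y' t / t - y t) (at t)" by simp
  qed
  moreover have "bessel_Y0 = y"
    by (auto simp: y_def lg_def J_def S_def bessel_Y0_eq_eval_fps algebra_simps)
  ultimately show ?thesis by simp
qed

lemma hankel1_0_sq_le_large: "\<exists>B\<ge>0. \<forall>t\<ge>1. (cmod (hankel1_0 t))^2 \<le> B / t"
proof -
  obtain B1 where B1: "\<forall>t\<ge>1. t * (bessel_J0 t)^2 \<le> B1" using bessel_J0_decay by blast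
  obtain B2 where B2: "\<forall>t\<ge>1. t * (bessel_Y0 t)^2 \<le> B2" using bessel_Y0_decay by blast
  have "(cmod (hankel1_0 t))^2 \<le> (B1 + B2) / t" if t: "t \<ge> 1" for t
    using B1[rule_format, OF t] B2[rule_format, OF t] t
    by (simp add: hankel1_0_def cmod_def field_simps)
  moreover have "0 \<le> B1 + B2"
    using B1[rule_format, of 1] B2[rule_format, of 1] zero_le_power2[of "bessel_J0 1"] zero_le_power2[of "bessel_Y0 1"]
    by linarith
  ultimately show ?thesis by blast
qed

lemma bessel_J0_abs_le: "\<bar>t :: real\<bar> \<le> 1 \<Longrightarrow> \<bar>bessel_J0 t\<bar> \<le> 4/3"
proof -
  assume t: "\<bar>t\<bar> \<le> 1"
  have "norm ((-1) ^ m * (t / 2) ^ (2 * m) / (fact m) ^ 2) \<le> (1/4)^m" for m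
  proof -
    have "norm ((-1) ^ m * (t / 2) ^ (2 * m) / (fact m) ^ 2) = (t^2/4)^m / (fact m)^2"
      by (simp add: abs_mult power_mult power_divide)
    also have "\<dots> \<le> (t^2/4)^m"
      using divide_left_mono[of 1 "(fact m)^2" "(t^2/4)^m"] by (simp add: one_le_power)
    also have "\<dots> \<le> (1/4)^m" using t by (intro power_mono) (auto simp: abs_square_le_1)
    finally show ?thesis .
  qed
  then have "norm (bessel_J0 t) \<le> (\<Sum>m. (1/4::real)^m)"
    unfolding bessel_J0_def by (intro norm_suminf_le) (auto simp: summable_geometric)
  then show ?thesis by (simp add: suminf_geometric)
qed

lemma Y0_series_abs_le:
  "\<bar>t :: real\<bar> \<le> 1 \<Longrightarrow> \<bar>\<Sum>m. (-1) ^ (m + 1) * harm m * (t / 2) ^ (2 * m) / (fact m) ^ 2\<bar> \<le> 2"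
proof -
  assume t: "\<bar>t\<bar> \<le> 1"
  have "norm ((-1) ^ (m + 1) * harm m * (t / 2) ^ (2 * m) / (fact m) ^ 2) \<le> (1/2)^m" for m
  proof -
    have "norm ((-1) ^ (m+1) * harm m * (t / 2) ^ (2 * m) / (fact m) ^ 2) = harm m * (t^2/4)^m / (fact m)^2"
      by (simp add: abs_mult power_mult power_divide harm_nonneg)
    also have "\<dots> \<le> harm m * (t^2/4)^m"
      using divide_left_mono[of 1 "(fact m)^2" "harm m * (t^2/4)^m"] by (simp add: one_le_power harm_nonneg)
    also have "\<dots> \<le> 2^m * (1/4)^m"
    proof (intro mult_mono power_mono)
      have "real m \<le> 2^m" using less_exp[of m] by (metis of_nat_less_numeral_power_cancel_iff less_imp_le)
      then show "harm m \<le> (2::real)^m" using harm_le_self[of m] by linarith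
    qed (use t in \<open>auto simp: abs_square_le_1\<close>)
    also have "\<dots> = (1/2)^m" by (simp add: four_power_eq power2_eq_square power_divide)
    finally show ?thesis .
  qed
  then have "norm (\<Sum>m. (-1) ^ (m + 1) * harm m * (t / 2) ^ (2 * m) / (fact m) ^ 2) \<le> (\<Sum>m. (1/2::real)^m)"
    by (intro norm_suminf_le) (auto simp: summable_geometric)
  then show ?thesis by (simp add: suminf_geometric)
qed

lemma bessel_Y0_abs_le:
  fixes t :: real
  assumes t: "0 < t" "t \<le> 1"
  shows "\<bar>bessel_Y0 t\<bar> \<le> 2/pi * (4/3 * (ln 2 + \<bar>euler_mascheroni\<bar> - ln t) + 2)"
proof -
  define S where "S = (\<Sum>m. (-1) ^ (m + 1) * harm m * (t / 2) ^ (2 * m) / (fact m) ^ 2)"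
  define X where "X = ln (t/2) + euler_mascheroni"
  have X: "\<bar>X\<bar> \<le> ln 2 + \<bar>euler_mascheroni\<bar> - ln t"
  proof -
    have "ln (t/2) = ln t - ln 2" "ln t \<le> 0" "0 \<le> ln (2::real)" using t by (simp_all add: ln_div)
    then show ?thesis unfolding X_def by arith
  qed
  have JS: "\<bar>bessel_J0 t\<bar> \<le> 4/3" "\<bar>S\<bar> \<le> 2"
    using t bessel_J0_abs_le[of t] Y0_series_abs_le[of t] by (simp_all add: S_def)
  have "bessel_Y0 t = 2/pi * (X * bessel_J0 t + S)"
    by (simp add: bessel_Y0_def X_def S_def algebra_simps)
  then have "\<bar>bessel_Y0 t\<bar> = 2/pi * \<bar>X * bessel_J0 t + S\<bar>"
    by (simp only: abs_mult) simp
  also have "\<dots> \<le> 2/pi * (\<bar>X\<bar> * \<bar>bessel_J0 t\<bar> + \<bar>S\<bar>)"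
    by (intro mult_left_mono) (metis abs_mult abs_triangle_ineq, simp)
  also have "\<dots> \<le> 2/pi * (4/3 * (ln 2 + \<bar>euler_mascheroni\<bar> - ln t) + 2)"
  proof -
    have "\<bar>X\<bar> * \<bar>bessel_J0 t\<bar> \<le> (ln 2 + \<bar>euler_mascheroni\<bar> - ln t) * (4/3)"
      using X JS by (intro mult_mono') auto
    then show ?thesis using JS by (intro mult_left_mono) (auto simp: field_simps)
  qed
  finally show ?thesis .
qed

lemma hankel1_0_sq_le_small: "\<exists>A\<ge>0. \<forall>t. 0 < t \<and> t \<le> 1 \<longrightarrow> (cmod (hankel1_0 t))^2 \<le> A / sqrt t"
proof -
  define P Q :: real where "P = 2/pi * (4/3 * (ln 2 + \<bar>euler_mascheroni\<bar>) + 2)" and "Q = 2/pi * 4/3"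
  have PQ: "P \<ge> 0" "Q \<ge> 0" by (auto simp: P_def Q_def)
  have "(cmod (hankel1_0 t))^2 \<le> (2 + 2*P^2 + 32*Q^2) / sqrt t" if t: "0 < t" "t \<le> 1" for t
  proof -
    have inv: "1 \<le> 1 / sqrt t" using t by simp
    have "\<bar>bessel_J0 t\<bar>^2 \<le> (4/3)^2"
      using bessel_J0_abs_le[of t] t by (intro power_mono) auto
    then have J: "(bessel_J0 t)^2 \<le> 2" by (simp add: power2_eq_square)
    have "2/pi * (4/3 * (ln 2 + \<bar>euler_mascheroni\<bar> - ln t) + 2) = P + Q * (- ln t)"
      by (simp add: P_def Q_def algebra_simps)
    then have "\<bar>bessel_Y0 t\<bar> \<le> P + Q * (- ln t)"
      using bessel_Y0_abs_le[OF t] by simp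
    then have "\<bar>bessel_Y0 t\<bar>^2 \<le> (P + Q * (- ln t))^2" by (intro power_mono) auto
    then have "(bessel_Y0 t)^2 \<le> (P + Q * (- ln t))^2" by simp
    also have "\<dots> \<le> 2*P^2 + 2*Q^2*(ln t)^2"
      using sum_squares_ge_zero[of "P - Q*(-ln t)" 0] by (simp add: power2_eq_square algebra_simps)
    finally have "(cmod (hankel1_0 t))^2 \<le> 2 + 2*P^2 + 2*Q^2*(ln t)^2"
      using J by (simp add: hankel1_0_def cmod_def)
    also have "\<dots> \<le> (2 + 2*P^2) * (1 / sqrt t) + 2*Q^2 * (16 / sqrt t)"
      using mult_left_mono[OF inv, of "2 + 2*P^2"] ln_sq_le_inverse_sqrt[OF t]
      by (intro add_mono mult_left_mono) auto
    finally show ?thesis by (simp add: add_divide_distrib)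
  qed
  moreover have "2 + 2*P^2 + 32*Q^2 \<ge> 0" by simp
  ultimately show ?thesis by blast
qed

lemma borel_measurable_hankel1_0: "hankel1_0 \<in> borel_measurable borel"
proof -
  have "continuous_on UNIV (eval_fps J0_fps)" "continuous_on UNIV (eval_fps Y0_series_fps)"
    using continuous_on_eval_fps[of J0_fps] continuous_on_eval_fps[of Y0_series_fps]
    by (simp_all add: fps_conv_radius_J0_fps fps_conv_radius_Y0_series_fps)
  then have "eval_fps J0_fps \<in> borel_measurable borel" "eval_fps Y0_series_fps \<in> borel_measurable borel"
    by (simp_all add: borel_measurable_continuous_onI)
  then show ?thesis
    unfolding hankel1_0_def[abs_def] Complex_eq bessel_J0_eq_eval_fps[abs_def] bessel_Y0_eq_eval_fps[abs_def]
    by measurable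
qed

section \<open>Arc length on a Lipschitz boundary\<close>

lemma Int_open_in_sets:
  assumes "sets M = sets (restrict_space borel (space M))" and "open S"
  shows "space M \<inter> S \<in> sets M"
  unfolding assms(1) sets_restrict_space using assms(2) by (intro image_eqI[where x=S]) auto

lemma space_bdry_measure [simp]: "space (bdry_measure D) = frontier D"
  by (simp add: bdry_measure_def space_measure_of_conv)

lemma sets_bdry_measure: "sets (bdry_measure D) = sets (restrict_space borel (frontier D))"
proof -
  have "sets (restrict_space borel (frontier D)) \<subseteq> Pow (frontier D)"
    using sets.sets_into_space[of _ "restrict_space borel (frontier D)"] by (auto simp: space_restrict_space)
  then show ?thesis
    using sets.sigma_sets_eq[of "restrict_space borel (frontier D)"]
    by (simp add: bdry_measure_def sets_measure_of_conv space_restrict_space)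
qed

text \<open>This holds even if \<open>hausdorff1_outer\<close> were not countably additive on the Borel sets:
  \<open>measure_of\<close> then yields the zero measure.\<close>

lemma emeasure_bdry_measure_le: "emeasure (bdry_measure D) A \<le> hausdorff1_outer A"
  by (simp add: bdry_measure_def emeasure_measure_of_conv)

lemma hausdorff1_outer_le_cover:
  assumes "\<And>\<delta>. \<delta> > 0 \<Longrightarrow> \<exists>C. A \<subseteq> (\<Union>i. C i) \<and> (\<forall>i. bounded (C i) \<and> diameter (C i) \<le> \<delta>)
      \<and> (\<Sum>i. ennreal (diameter (C i))) \<le> K"
  shows "hausdorff1_outer A \<le> K"
  unfolding hausdorff1_outer_def
proof (rule SUP_least)
  fix \<delta> :: real assume "\<delta> \<in> {0<..}"
  then obtain C where "A \<subseteq> (\<Union>i. C i)" "\<forall>i. bounded (C i) \<and> diameter (C i) \<le> \<delta>"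
    "(\<Sum>i. ennreal (diameter (C i))) \<le> K"
    using assms by force
  then show "(INF C \<in> {C. A \<subseteq> (\<Union>i. C i) \<and> (\<forall>i. bounded (C i) \<and> diameter (C i) \<le> \<delta>)}.
      \<Sum>i. ennreal (diameter (C i))) \<le> K"
    by (intro INF_lower2[of C]) auto
qed

lemma bounded_diameter_le_by_projection:
  fixes S :: "'a::real_normed_vector set" and \<pi> :: "'a \<Rightarrow> real"
  assumes K: "K \<ge> 0" and l: "l \<ge> 0"
    and lip: "\<And>z w. z \<in> S \<Longrightarrow> w \<in> S \<Longrightarrow> dist z w \<le> K * \<bar>\<pi> z - \<pi> w\<bar>"
    and width: "\<And>z w. z \<in> S \<Longrightarrow> w \<in> S \<Longrightarrow> \<bar>\<pi> z - \<pi> w\<bar> \<le> l"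
  shows "bounded S" and "diameter S \<le> K * l"
proof -
  have dist: "dist z w \<le> K * l" if "z \<in> S" "w \<in> S" for z w
    using lip[OF that] mult_left_mono[OF width[OF that] K] by linarith
  then show "bounded S" unfolding bounded_def by blast
  show "diameter S \<le> K * l"
    using dist K l by (intro diameter_le) (auto simp: dist_norm)
qed

text \<open>\<open>A\<close> is a Lipschitz image of an interval of length \<open>2r\<close>; slicing that interval into \<open>N\<close>
  pieces covers \<open>A\<close> by \<open>N + 1\<close> sets of diameter at most \<open>2 r K / N\<close>.\<close>

lemma hausdorff1_outer_le_by_projection:
  fixes A :: "'a::real_normed_vector set" and \<pi> :: "'a \<Rightarrow> real"
  assumes K: "K \<ge> 0" and r: "r > 0"
    and range: "\<And>z. z \<in> A \<Longrightarrow> \<bar>\<pi> z - a\<bar> \<le> r"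
    and lip: "\<And>z w. z \<in> A \<Longrightarrow> w \<in> A \<Longrightarrow> dist z w \<le> K * \<bar>\<pi> z - \<pi> w\<bar>"
  shows "hausdorff1_outer A \<le> ennreal (4 * r * K)"
proof (rule hausdorff1_outer_le_cover)
  fix \<delta> :: real assume \<delta>: "\<delta> > 0"
  define N :: nat where "N = nat \<lceil>2*r*K/\<delta>\<rceil> + 1"
  define h where "h = 2*r / N"
  have N: "N \<ge> 1" "2*r*K/\<delta> \<le> N" unfolding N_def by linarith+
  have h: "h > 0" "N * h = 2*r" using r N by (simp_all add: h_def)
  define s where "s z = (\<pi> z - (a - r)) / h" for z
  define C where "C i = {z\<in>A. i \<le> s z \<and> s z \<le> i + 1}" for i :: nat
  have s: "0 \<le> s z" "s z \<le> N" if "z \<in> A" for z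
    using range[OF that] h by (auto simp: s_def field_simps)
  have "\<bar>\<pi> z - \<pi> w\<bar> \<le> h" if "z \<in> C i" "w \<in> C i" for z w i
  proof -
    have "s z - s w = (\<pi> z - \<pi> w) / h" by (simp add: s_def diff_divide_distrib)
    then have "\<bar>\<pi> z - \<pi> w\<bar> = h * \<bar>s z - s w\<bar>" using h by (simp add: abs_divide)
    also have "\<dots> \<le> h" using that h(1) by (auto simp: C_def abs_le_iff mult_le_cancel_left1)
    finally show ?thesis .
  qed
  then have bounded: "bounded (C i)" and diam: "diameter (C i) \<le> K * h" for i
    using bounded_diameter_le_by_projection[of K h "C i" \<pi>] K h lip by (auto simp: C_def)
  have "K * h \<le> \<delta>" using N \<delta> K r by (simp add: h_def field_simps)
  moreover have "A \<subseteq> (\<Union>i. C i)"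
  proof
    fix z assume "z \<in> A"
    then have "z \<in> C (nat \<lfloor>s z\<rfloor>)" using s[of z] by (auto simp: C_def) linarith
    then show "z \<in> (\<Union>i. C i)" by blast
  qed
  moreover have "(\<Sum>i. ennreal (diameter (C i))) \<le> ennreal (4 * r * K)"
  proof -
    have "C i = {}" if "i > N" for i using s that by (force simp: C_def)
    then have "(\<Sum>i. ennreal (diameter (C i))) = (\<Sum>i\<le>N. ennreal (diameter (C i)))"
      by (intro suminf_finite) auto
    also have "\<dots> \<le> (\<Sum>i\<le>N. ennreal (K * h))"
      by (intro sum_mono ennreal_leI diam)
    also have "\<dots> = ennreal ((N + 1) * (K * h))"
      using K h by (simp add: ennreal_of_nat_eq_real_of_nat ennreal_mult)
    also have "(N + 1) * (K * h) = (1 + 1 / N) * (2 * r * K)"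
      using N by (simp add: h_def field_simps)
    also have "\<dots> \<le> 2 * (2 * r * K)" using N r K by (intro mult_right_mono) auto
    finally show ?thesis by (simp add: ennreal_leI mult.assoc)
  qed
  ultimately show "\<exists>C. A \<subseteq> (\<Union>i. C i) \<and> (\<forall>i. bounded (C i) \<and> diameter (C i) \<le> \<delta>)
      \<and> (\<Sum>i. ennreal (diameter (C i))) \<le> ennreal (4 * r * K)"
    using bounded diam by (intro exI[of _ C]) (auto intro: order_trans)
qed

lemma frontier_in_chart_on_graph:
  fixes Q :: "real^2 \<Rightarrow> real^2" and g :: "real \<Rightarrow> real"
  assumes D: "open D" and Q: "orthogonal_transformation Q" and g: "L-lipschitz_on UNIV g"
    and U: "open U" and DU: "D \<inter> U = {x \<in> U. Q (x - p) $ 2 < g (Q (x - p) $ 1)}"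
    and z: "z \<in> frontier D" "z \<in> U"
  shows "Q (z - p) $ 2 = g (Q (z - p) $ 1)"
proof (rule ccontr)
  assume ne: "Q (z - p) $ 2 \<noteq> g (Q (z - p) $ 1)"
  have "z \<notin> D" using z D by (simp add: frontier_def interior_open)
  then have "\<not> Q (z - p) $ 2 < g (Q (z - p) $ 1)" using DU z(2) by blast
  then have gt: "g (Q (z - p) $ 1) < Q (z - p) $ 2" using ne by simp
  have "bounded_linear Q"
    using Q orthogonal_transformation_linear linear_conv_bounded_linear by blast
  then have cQ: "continuous_on UNIV (\<lambda>x. Q (x - p))"
    by (rule continuous_on_compose2[OF linear_continuous_on, of _ UNIV "\<lambda>x. x - p"])
      (auto intro: continuous_intros)
  have c1: "continuous_on UNIV (\<lambda>x. Q (x - p) $ 1)" and c2: "continuous_on UNIV (\<lambda>x. Q (x - p) $ 2)"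
    using cQ by (auto intro: continuous_on_component)
  have "continuous_on UNIV (\<lambda>x. g (Q (x - p) $ 1))"
    using continuous_on_compose2[OF lipschitz_on_continuous_on[OF g] c1] by auto
  then have "open {x. g (Q (x - p) $ 1) < Q (x - p) $ 2}"
    using open_Collect_less c2 by blast
  then have V: "open (U \<inter> {x. g (Q (x - p) $ 1) < Q (x - p) $ 2})" using U by blast
  have "z \<in> closure D \<inter> (U \<inter> {x. g (Q (x - p) $ 1) < Q (x - p) $ 2})"
    using gt z by (simp add: frontier_def)
  then have "D \<inter> (U \<inter> {x. g (Q (x - p) $ 1) < Q (x - p) $ 2}) \<noteq> {}"
    using open_Int_closure_eq_empty[OF V, of D] by (auto simp: Int_commute)
  then obtain w where w: "w \<in> D \<inter> U" "g (Q (w - p) $ 1) < Q (w - p) $ 2" by blast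
  then have "Q (w - p) $ 2 < g (Q (w - p) $ 1)" using DU by simp
  with w(2) show False by simp
qed

lemma hausdorff1_frontier_chart_ball_le:
  fixes Q :: "real^2 \<Rightarrow> real^2" and g :: "real \<Rightarrow> real"
  assumes D: "open D" and Q: "orthogonal_transformation Q" and g: "L-lipschitz_on UNIV g"
    and U: "open U" and DU: "D \<inter> U = {x \<in> U. Q (x - p) $ 2 < g (Q (x - p) $ 1)}"
    and r: "r > 0"
  shows "hausdorff1_outer (frontier D \<inter> U \<inter> ball x r) \<le> ennreal (4 * r * (1 + L))"
proof (rule hausdorff1_outer_le_by_projection)
  have "linear Q" using Q by (rule orthogonal_transformation_linear)
  then have dist_Q: "dist z w = norm (Q (z - p) - Q (w - p))" for z w
    using linear_diff[of Q "z - p" "w - p"] orthogonal_transformation_norm[OF Q, of "z - w"]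
    by (simp add: dist_norm)
  show "\<bar>Q (z - p) $ 1 - Q (x - p) $ 1\<bar> \<le> r" if "z \<in> frontier D \<inter> U \<inter> ball x r" for z
  proof -
    have "\<bar>Q (z - p) $ 1 - Q (x - p) $ 1\<bar> \<le> dist z x"
      using component_le_norm_cart[of "Q (z - p) - Q (x - p)" 1] by (simp add: dist_Q)
    then show ?thesis using that by (simp add: dist_commute)
  qed
  show "dist z w \<le> (1 + L) * \<bar>Q (z - p) $ 1 - Q (w - p) $ 1\<bar>"
    if z: "z \<in> frontier D \<inter> U \<inter> ball x r" and w: "w \<in> frontier D \<inter> U \<inter> ball x r" for z w
  proof -
    have graph: "Q (v - p) $ 2 = g (Q (v - p) $ 1)" if "v \<in> frontier D" "v \<in> U" for v
      using frontier_in_chart_on_graph[OF D Q g U DU that] .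
    have "dist z w \<le> \<bar>Q (z - p) $ 1 - Q (w - p) $ 1\<bar> + \<bar>Q (z - p) $ 2 - Q (w - p) $ 2\<bar>"
      using norm_le_l1_cart[of "Q (z - p) - Q (w - p)"] by (simp add: dist_Q sum_2)
    also have "\<bar>Q (z - p) $ 2 - Q (w - p) $ 2\<bar> \<le> L * \<bar>Q (z - p) $ 1 - Q (w - p) $ 1\<bar>"
      using lipschitz_onD[OF g, of "Q (z - p) $ 1" "Q (w - p) $ 1"] graph z w by (simp add: dist_real_def)
    finally show ?thesis by (simp add: algebra_simps)
  qed
qed (use r lipschitz_on_nonneg[OF g] in auto)

lemma emeasure_ball_le_by_compactness:
  fixes M :: "'a::metric_space measure"
  assumes compact: "compact (space M)"
    and sets: "sets M = sets (restrict_space borel (space M))"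
    and local: "\<forall>p\<in>space M. \<exists>U c. open U \<and> p \<in> U \<and> c \<ge> 0 \<and>
      (\<forall>x r. r > 0 \<longrightarrow> emeasure M (space M \<inter> U \<inter> ball x r) \<le> ennreal (c * r))"
  shows "\<exists>c\<ge>0. \<forall>x r. r > 0 \<longrightarrow> emeasure M (space M \<inter> ball x r) \<le> ennreal (c * r)"
proof -
  obtain U c where U: "\<And>p. p \<in> space M \<Longrightarrow> open (U p) \<and> p \<in> U p \<and> c p \<ge> 0 \<and>
      (\<forall>x r. r > 0 \<longrightarrow> emeasure M (space M \<inter> U p \<inter> ball x r) \<le> ennreal (c p * r))"
    using bchoice[OF local] by (metis (no_types, lifting) case_prod_conv surj_pair)
  obtain P where P: "P \<subseteq> space M" "finite P" "space M \<subseteq> (\<Union>p\<in>P. U p)"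
    using compactE_image[OF compact, of "space M" U] U by blast
  have "emeasure M (space M \<inter> ball x r) \<le> ennreal ((\<Sum>p\<in>P. c p) * r)" if r: "r > 0" for x r
  proof -
    have pieces: "space M \<inter> U p \<inter> ball x r \<in> sets M" if "p \<in> P" for p
      using Int_open_in_sets[OF sets, of "U p \<inter> ball x r"] U P that by (auto simp: Int_assoc)
    have "emeasure M (space M \<inter> ball x r) \<le> emeasure M (\<Union>p\<in>P. space M \<inter> U p \<inter> ball x r)"
      using P pieces by (intro emeasure_mono sets.finite_UN) auto
    also have "\<dots> \<le> (\<Sum>p\<in>P. emeasure M (space M \<inter> U p \<inter> ball x r))"
      using P pieces by (intro emeasure_subadditive_finite) auto
    also have "\<dots> \<le> (\<Sum>p\<in>P. ennreal (c p * r))"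
      using U P r by (intro sum_mono) auto
    also have "\<dots> = ennreal ((\<Sum>p\<in>P. c p) * r)"
      using U P r by (simp add: sum_ennreal sum_distrib_right subset_iff)
    finally show ?thesis .
  qed
  moreover have "(\<Sum>p\<in>P. c p) \<ge> 0" using U P by (intro sum_nonneg) auto
  ultimately show ?thesis by blast
qed

lemma emeasure_bdry_measure_ball_le:
  assumes D: "open D" and bounded: "bounded (frontier D)" and lip: "lipschitz_boundary D"
  shows "\<exists>c\<ge>0. \<forall>x r. r > 0 \<longrightarrow> emeasure (bdry_measure D) (frontier D \<inter> ball x r) \<le> ennreal (c * r)"
proof -
  have "\<exists>U c. open U \<and> p \<in> U \<and> c \<ge> 0 \<and> (\<forall>x r. r > 0 \<longrightarrow>
      emeasure (bdry_measure D) (frontier D \<inter> U \<inter> ball x r) \<le> ennreal (c * r))"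
    if p: "p \<in> frontier D" for p
  proof -
    obtain Q g L U where chart: "orthogonal_transformation (Q :: real^2 \<Rightarrow> real^2)"
      "L-lipschitz_on UNIV g" "open U" "p \<in> U" "D \<inter> U = {x \<in> U. Q (x - p) $ 2 < g (Q (x - p) $ 1)}"
      using lip p unfolding lipschitz_boundary_def by blast
    have "emeasure (bdry_measure D) (frontier D \<inter> U \<inter> ball x r) \<le> ennreal (4 * (1 + L) * r)"
      if "r > 0" for x r
      using order.trans[OF emeasure_bdry_measure_le hausdorff1_frontier_chart_ball_le[OF D chart(1,2,3,5) that]]
      by (simp add: mult_ac)
    moreover have "4 * (1 + L) \<ge> 0" using lipschitz_on_nonneg[OF chart(2)] by simp
    ultimately show ?thesis using chart(3,4) by blast
  qed
  moreover have "compact (frontier D)" using bounded by (simp add: compact_eq_bounded_closed)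
  ultimately show ?thesis
    using emeasure_ball_le_by_compactness[of "bdry_measure D"] sets_bdry_measure[of D]
    unfolding space_bdry_measure by blast
qed

section \<open>The kernel estimate\<close>

lemma ex_power_interval:
  fixes b s :: real
  assumes b: "b > 1" and s: "s \<ge> 1"
  shows "\<exists>j::nat. b^j \<le> s \<and> s < b^(j+1)"
proof -
  define j where "j = nat \<lfloor>log b s\<rfloor>"
  have "real j \<le> log b s" "log b s < real j + 1"
    using b s by (simp_all add: j_def)
  then have "b powr real j \<le> s" "\<not> b powr (real j + 1) \<le> s"
    using b s le_log_iff[of b s "real j"] le_log_iff[of b s "real j + 1"] by auto
  then show ?thesis
    using b powr_realpow[of b "Suc j"] by (intro exI[of _ j]) (auto simp: powr_realpow add.commute)
qed

lemma dyadic_majorant: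
  fixes h :: "real \<Rightarrow> real" and N :: nat
  assumes small: "\<And>t. 0 < t \<Longrightarrow> t \<le> 1 \<Longrightarrow> h t \<le> A / sqrt t"
    and large: "\<And>t. 1 \<le> t \<Longrightarrow> h t \<le> B / t"
    and A: "A \<ge> 0" and B: "B \<ge> 0" and t: "t > 0"
  shows "ennreal (h t) \<le> (\<Sum>j. ennreal (A * 2^(j+1)) * indicator {..<2/4^j} t)
      + (\<Sum>j<N. ennreal (B / 2^j) * indicator {..<2^(j+1)} t) + ennreal (B / 2^N)"
    (is "_ \<le> ?S1 + ?S2 + ?S3")
proof -
  consider "t < 1" | "1 \<le> t" "t < 2^N" | "2^N \<le> t" by linarith
  then show ?thesis
  proof cases
    case 1
    obtain j where j: "4^j \<le> 1/t" "1/t < 4^(j+1)" using ex_power_interval[of 4 "1/t"] 1 t by auto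
    have "1 / sqrt t = sqrt (1/t)" by (simp add: real_sqrt_divide)
    also have "\<dots> \<le> sqrt (4^(j+1))" using j(2) by simp
    also have "\<dots> = 2^(j+1)" by (simp only: four_power_eq[of "j+1"] real_sqrt_abs) simp
    finally have "A * (1 / sqrt t) \<le> A * 2^(j+1)" using A by (rule mult_left_mono)
    then have "h t \<le> A * 2^(j+1)" using small[of t] 1 t by simp
    moreover have "t < 2/4^j" using j(1) t by (simp add: field_simps)
    ultimately have "ennreal (h t) \<le> ennreal (A * 2^(j+1)) * indicator {..<2/4^j} t"
      by (simp add: ennreal_leI)
    also have "\<dots> \<le> ?S1"
    proof -
      define f where "f j = ennreal (A * 2^(j+1)) * indicator {..<2/4^j} t" for j
      have "f j \<le> suminf f" using sum_le_suminf[of f "{j}"] by simp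
      then show ?thesis unfolding f_def .
    qed
    finally show ?thesis by (simp add: add.assoc add_increasing2)
  next
    case 2
    obtain j where j: "2^j \<le> t" "t < 2^(j+1)" using ex_power_interval[of 2 t] 2 by auto
    have "(2::real)^j < 2^N" using j(1) 2 by linarith
    then have "j < N" by simp
    have "B / t \<le> B / 2^j" using j(1) B t by (intro divide_left_mono) auto
    then have "ennreal (h t) \<le> ennreal (B / 2^j) * indicator {..<2^(j+1)} t"
      using large[of t] 2 j by (simp add: ennreal_leI)
    also have "\<dots> \<le> ?S2" using \<open>j < N\<close> by (intro member_le_sum) auto
    finally show ?thesis by (simp add: add_increasing add_increasing2)
  next
    case 3
    have "B / t \<le> B / 2^N" using 3 B t by (intro divide_left_mono) auto
    moreover have "1 \<le> t" using 3 one_le_power[of "2::real" N] by linarith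
    ultimately have "ennreal (h t) \<le> ?S3"
      using large[of t] by (intro ennreal_leI) simp
    then show ?thesis by (simp add: add_increasing)
  qed
qed

lemma nn_integral_indicator_ball_le:
  fixes M :: "'a::metric_space measure"
  assumes sets: "sets M = sets (restrict_space borel (space M))" and a: "a \<ge> 0" and c: "c \<ge> 0"
    and dens: "emeasure M (space M \<inter> ball x r) \<le> ennreal (c * r)"
  shows "(\<integral>\<^sup>+ y. ennreal a * indicator (space M \<inter> ball x r) y \<partial>M) \<le> ennreal (a * c * r)"
proof -
  have "(\<integral>\<^sup>+ y. ennreal a * indicator (space M \<inter> ball x r) y \<partial>M) = ennreal a * emeasure M (space M \<inter> ball x r)"
    using Int_open_in_sets[OF sets] by (intro nn_integral_cmult_indicator) auto
  also have "\<dots> \<le> ennreal a * ennreal (c * r)" using dens by (rule mult_left_mono) simp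
  finally show ?thesis using a by (simp add: ennreal_mult'[symmetric] mult.assoc)
qed

lemma nn_integral_dyadic_kernel_le:
  fixes M :: "'a::metric_space measure" and h :: "real \<Rightarrow> real" and N :: nat
  assumes sets: "sets M = sets (restrict_space borel (space M))"
    and x: "x \<notin> space M" and k: "k > 0" and A: "A \<ge> 0" and B: "B \<ge> 0" and c: "c \<ge> 0"
    and dens: "\<And>r. r > 0 \<Longrightarrow> emeasure M (space M \<inter> ball x r) \<le> ennreal (c * r)"
    and small: "\<And>t. 0 < t \<Longrightarrow> t \<le> 1 \<Longrightarrow> h t \<le> A / sqrt t"
    and large: "\<And>t. 1 \<le> t \<Longrightarrow> h t \<le> B / t"
  shows "(\<integral>\<^sup>+ y. ennreal (h (k * dist x y)) \<partial>M)
    \<le> ennreal ((8*A*c + 2*B*c*N) / k) + ennreal (B / 2^N) * emeasure M (space M)"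
proof -
  define ball_ind :: "real \<Rightarrow> 'a \<Rightarrow> ennreal"
    where "ball_ind r = indicator (space M \<inter> ball x (r / k))" for r
  have [measurable]: "ball_ind r \<in> borel_measurable M" for r
    using Int_open_in_sets[OF sets] by (simp add: ball_ind_def)
  have ball_term: "(\<integral>\<^sup>+ y. ennreal a * ball_ind r y \<partial>M) \<le> ennreal (a * c * r / k)"
    if "a \<ge> 0" "r > 0" for a r
    using nn_integral_indicator_ball_le[OF sets that(1) c dens[of "r / k"]] that k
    by (simp add: ball_ind_def)
  have "(\<integral>\<^sup>+ y. ennreal (h (k * dist x y)) \<partial>M)
    \<le> (\<integral>\<^sup>+ y. (\<Sum>j. ennreal (A * 2^(j+1)) * ball_ind (2/4^j) y)
      + (\<Sum>j<N. ennreal (B / 2^j) * ball_ind (2^(j+1)) y) + ennreal (B / 2^N) \<partial>M)"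
  proof (rule nn_integral_mono)
    fix y assume y: "y \<in> space M"
    have "indicator {..<r} (k * dist x y) = ball_ind r y" for r
      using y k by (simp add: ball_ind_def indicator_def dist_commute field_simps)
    moreover have "x \<noteq> y" using x y by auto
    ultimately show "ennreal (h (k * dist x y)) \<le> (\<Sum>j. ennreal (A * 2^(j+1)) * ball_ind (2/4^j) y)
      + (\<Sum>j<N. ennreal (B / 2^j) * ball_ind (2^(j+1)) y) + ennreal (B / 2^N)"
      using dyadic_majorant[OF small large A B, of "k * dist x y" N] k by simp
  qed
  also have "\<dots> = (\<Sum>j. \<integral>\<^sup>+ y. ennreal (A * 2^(j+1)) * ball_ind (2/4^j) y \<partial>M)
      + (\<Sum>j<N. \<integral>\<^sup>+ y. ennreal (B / 2^j) * ball_ind (2^(j+1)) y \<partial>M)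
      + ennreal (B / 2^N) * emeasure M (space M)"
    by (simp add: nn_integral_add nn_integral_suminf nn_integral_sum)
  also have "\<dots> \<le> (\<Sum>j. ennreal (4 * A * c / k * (1/2)^j)) + (\<Sum>j<N. ennreal (2 * B * c / k))
      + ennreal (B / 2^N) * emeasure M (space M)"
  proof (intro add_mono order.refl suminf_le sum_mono)
    fix j :: nat
    have "(4::real)^j = 2^j * 2^j" by (simp add: four_power_eq power2_eq_square)
    then show "(\<integral>\<^sup>+ y. ennreal (A * 2^(j+1)) * ball_ind (2/4^j) y \<partial>M) \<le> ennreal (4 * A * c / k * (1/2)^j)"
      using ball_term[of "A * 2^(j+1)" "2/4^j"] A by (simp add: field_simps power_divide)
    show "(\<integral>\<^sup>+ y. ennreal (B / 2^j) * ball_ind (2^(j+1)) y \<partial>M) \<le> ennreal (2 * B * c / k)"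
      using ball_term[of "B / 2^j" "2^(j+1)"] B by (simp add: field_simps)
  qed auto
  also have "(\<Sum>j. ennreal (4 * A * c / k * (1/2)^j)) = ennreal (8 * A * c / k)"
    using sums_mult[OF geometric_sums[of "1/2::real"], of "4 * A * c / k"] A c k
    by (simp add: suminf_ennreal2 sums_iff mult.assoc)
  also have "(\<Sum>j<N. ennreal (2 * B * c / k)) = ennreal (\<Sum>j<N. 2 * B * c / k)"
    using B c k by (intro sum_ennreal) auto
  also have "ennreal (8 * A * c / k) + ennreal (\<Sum>j<N. 2 * B * c / k) = ennreal ((8*A*c + 2*B*c*N) / k)"
    using A B c k by (simp add: ennreal_plus add_divide_distrib)
  finally show ?thesis .
qed

lemma dyadic_bound_le_log:
  fixes a b B m d k0 k :: real and N :: nat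
  assumes nonneg: "a \<ge> 0" "b \<ge> 0" "B \<ge> 0" "m \<ge> 0" and d: "d > 0" and k: "0 < k0" "k0 \<le> k"
    and N: "N = nat \<lceil>log 2 (1 + k * m)\<rceil>"
  shows "(a + b * N) / k + B / 2^N * m
    \<le> ((a + b * (log 2 (1 + m/d) + 1) + B) / ln (1 + k0 * d) + b / ln 2) * ln (1 + k * d) / k"
proof -
  define y where "y = log 2 (1 + k * m)"
  define K0 where "K0 = a + b * (log 2 (1 + m/d) + 1) + B"
  have k_pos: "k > 0" using k by simp
  have y0: "y \<ge> 0" using nonneg k_pos by (simp add: y_def zero_le_log_cancel_iff add_pos_nonneg)
  then have Ny: "y \<le> N" "N \<le> y + 1" unfolding N y_def[symmetric] by linarith+
  have "1 + k * m = 2 powr y" using nonneg k_pos by (simp add: y_def add_pos_nonneg)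
  also have "\<dots> \<le> 2 ^ N" using Ny(1) by (simp flip: powr_realpow)
  finally have B_term: "B / 2^N * m \<le> B / k"
    using nonneg k_pos by (simp add: field_simps mult_left_mono)
  have "y \<le> log 2 (1 + m/d) + ln (1 + k * d) / ln 2"
  proof -
    have "1 + k * m \<le> (1 + m/d) * (1 + k * d)"
      using nonneg d k_pos by (simp add: field_simps)
    then have "y \<le> log 2 ((1 + m/d) * (1 + k * d))"
      using nonneg k_pos unfolding y_def by (intro log_mono) (auto simp: add_pos_nonneg)
    also have "\<dots> = log 2 (1 + m/d) + ln (1 + k * d) / ln 2"
    proof -
      have "1 + m/d > 0" "1 + k * d > 0" using nonneg d k_pos by (simp_all add: add_pos_nonneg)
      then show ?thesis by (simp add: log_mult) (simp add: log_def)
    qed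
    finally show ?thesis .
  qed
  then have "b * N \<le> b * (log 2 (1 + m/d) + 1 + ln (1 + k * d) / ln 2)"
    using Ny(2) nonneg by (intro mult_left_mono) auto
  then have "(a + b * N) / k + B / 2^N * m \<le> (a + b * (log 2 (1 + m/d) + 1 + ln (1 + k * d) / ln 2)) / k + B / k"
    using B_term k_pos by (intro add_mono divide_right_mono) auto
  also have "\<dots> = (K0 + b / ln 2 * ln (1 + k * d)) / k"
    unfolding K0_def using k_pos by (simp add: field_simps)
  also have "K0 \<le> K0 / ln (1 + k0 * d) * ln (1 + k * d)"
  proof -
    have "k0 * d \<le> k * d" using d k by (intro mult_right_mono) auto
    then have "0 < ln (1 + k0 * d)" "ln (1 + k0 * d) \<le> ln (1 + k * d)"
      using d k by (simp_all add: add_pos_pos)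
    moreover have "log 2 (1 + m/d) \<ge> 0" using nonneg d by (simp add: zero_le_log_cancel_iff add_pos_nonneg)
    then have "K0 \<ge> 0" using nonneg unfolding K0_def by simp
    ultimately show ?thesis by (simp add: field_simps mult_left_mono)
  qed
  finally show ?thesis unfolding K0_def using k_pos by (simp add: divide_right_mono algebra_simps)
qed

lemma emeasure_space_le_diameter:
  fixes M :: "'a::metric_space measure"
  assumes bounded: "bounded (space M)" and c: "c \<ge> 0"
    and dens: "\<And>x r. r > 0 \<Longrightarrow> emeasure M (space M \<inter> ball x r) \<le> ennreal (c * r)"
  shows "emeasure M (space M) \<le> ennreal (c * diameter (space M))"
proof (cases "space M = {}")
  case False
  then obtain p where p: "p \<in> space M" by blast
  show ?thesis
  proof (rule ennreal_le_epsilon)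
    fix e :: real assume e: "e > 0"
    define r where "r = diameter (space M) + e / (c + 1)"
    have r: "r > 0" using e c diameter_ge_0[OF bounded] by (simp add: r_def add_nonneg_pos)
    have "e / (c + 1) > 0" using e c by simp
    have "space M \<subseteq> ball p r"
    proof
      fix y assume "y \<in> space M"
      then have "dist p y \<le> diameter (space M)" by (rule diameter_bounded_bound[OF bounded p])
      with \<open>e / (c + 1) > 0\<close> show "y \<in> ball p r" by (simp add: r_def)
    qed
    then have "emeasure M (space M) = emeasure M (space M \<inter> ball p r)" by (simp add: Int_absorb2)
    also have "\<dots> \<le> ennreal (c * r)" using dens[OF r] .
    also have "c * r \<le> c * diameter (space M) + e"
    proof -
      have "c * (e / (c + 1)) \<le> e" using e c by (simp add: field_simps)
      then show ?thesis by (simp add: r_def distrib_left)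
    qed
    then have "ennreal (c * r) \<le> ennreal (c * diameter (space M) + e)" by (rule ennreal_leI)
    also have "\<dots> = ennreal (c * diameter (space M)) + ennreal e"
      using c e diameter_ge_0[OF bounded] by (intro ennreal_plus) auto
    finally show "emeasure M (space M) \<le> ennreal (c * diameter (space M)) + ennreal e" .
  qed
qed simp

lemma nn_integral_dyadic_kernel_le_log:
  fixes M :: "'a::metric_space measure" and h :: "real \<Rightarrow> real"
  assumes sets: "sets M = sets (restrict_space borel (space M))" and bounded: "bounded (space M)"
    and c: "c \<ge> 0" and dens: "\<And>x r. r > 0 \<Longrightarrow> emeasure M (space M \<inter> ball x r) \<le> ennreal (c * r)"
    and A: "A \<ge> 0" and small: "\<And>t. 0 < t \<Longrightarrow> t \<le> 1 \<Longrightarrow> h t \<le> A / sqrt t"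
    and B: "B \<ge> 0" and large: "\<And>t. 1 \<le> t \<Longrightarrow> h t \<le> B / t"
    and k0: "k0 > 0"
  shows "\<exists>K\<ge>0. \<forall>k\<ge>k0. \<forall>x. x \<notin> space M \<longrightarrow>
    (\<integral>\<^sup>+ y. ennreal (h (k * dist x y)) \<partial>M) \<le> ennreal (K * ln (1 + k * diameter (space M)) / k)"
proof -
  define d where "d = diameter (space M)"
  have total: "emeasure M (space M) \<le> ennreal (c * d)"
    unfolding d_def using bounded c dens by (rule emeasure_space_le_diameter)
  show ?thesis
  proof (cases "d = 0")
    case True
    have "(\<integral>\<^sup>+ y. ennreal (h (k * dist x y)) \<partial>M) \<le> (\<integral>\<^sup>+ y. \<infinity> \<partial>M)" for k x
      by (intro nn_integral_mono) simp
    also have "(\<integral>\<^sup>+ y. \<infinity> \<partial>M) = 0" using total True by simp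
    finally show ?thesis by (intro exI[of _ 0]) simp
  next
    case False
    then have d: "d > 0" using diameter_ge_0[OF bounded] by (simp add: d_def)
    define K where "K = (8*A*c + 2*B*c * (log 2 (1 + c) + 1) + B) / ln (1 + k0 * d) + 2*B*c / ln 2"
    have "K \<ge> 0"
      using A B c d k0 by (simp add: K_def zero_le_log_cancel_iff add_pos_nonneg ln_ge_zero)
    moreover have "(\<integral>\<^sup>+ y. ennreal (h (k * dist x y)) \<partial>M) \<le> ennreal (K * ln (1 + k * d) / k)"
      if k: "k \<ge> k0" and x: "x \<notin> space M" for k x
    proof -
      \<comment> \<open>\<open>N\<close> is chosen so that the far field, \<open>k |x - y| \<ge> 2^N\<close>, contributes only \<open>O(1/k)\<close>.\<close>
      define N where "N = nat \<lceil>log 2 (1 + k * (c * d))\<rceil>"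
      have "(\<integral>\<^sup>+ y. ennreal (h (k * dist x y)) \<partial>M)
          \<le> ennreal ((8*A*c + 2*B*c*N) / k) + ennreal (B / 2^N) * emeasure M (space M)"
        using x k k0 by (intro nn_integral_dyadic_kernel_le sets A B c dens small large) auto
      also have "\<dots> \<le> ennreal ((8*A*c + 2*B*c*N) / k) + ennreal (B / 2^N) * ennreal (c * d)"
        using total by (intro add_left_mono mult_left_mono) simp_all
      also have "\<dots> = ennreal ((8*A*c + 2*B*c*N) / k + B / 2^N * (c * d))"
      proof -
        have "ennreal (B / 2^N) * ennreal (c * d) = ennreal (B / 2^N * (c * d))"
          using B c d by (intro ennreal_mult[symmetric]) auto
        then show ?thesis using A B c d k k0 by (simp add: ennreal_plus)
      qed
      also have "\<dots> \<le> ennreal (K * ln (1 + k * d) / k)"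
        using dyadic_bound_le_log[of "8*A*c" "2*B*c" B "c*d" d k0 k N] A B c d k k0
        by (intro ennreal_leI) (simp add: K_def N_def mult.assoc)
      finally show ?thesis .
    qed
    ultimately show ?thesis unfolding d_def by blast
  qed
qed

lemma norm_integral_mult_le_sqrt:
  fixes f g :: "'a \<Rightarrow> complex"
  assumes [measurable]: "f \<in> borel_measurable M" "g \<in> borel_measurable M"
    and f: "(\<integral>\<^sup>+ y. ennreal ((cmod (f y))^2) \<partial>M) \<le> ennreal Q" and Q: "Q \<ge> 0"
    and g: "integrable M (\<lambda>y. (cmod (g y))^2)"
  shows "cmod (LINT y|M. f y * g y) \<le> sqrt Q * sqrt (LINT y|M. (cmod (g y))^2)"
proof (cases "integrable M (\<lambda>y. f y * g y)")
  case False
  then show ?thesis using Q by (simp add: not_integrable_integral_eq integral_nonneg_AE)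
next
  case True
  define P where "P = (LINT y|M. (cmod (g y))^2)"
  have P: "P \<ge> 0" unfolding P_def by (rule integral_nonneg_AE) auto
  have "ennreal (cmod (LINT y|M. f y * g y)) ^ 2
      \<le> (\<integral>\<^sup>+ y. ennreal (cmod (f y)) * ennreal (cmod (g y)) \<partial>M) ^ 2"
    using integral_norm_bound_ennreal[OF True] by (intro power_mono) (simp_all add: norm_mult ennreal_mult)
  also have "\<dots> \<le> (\<integral>\<^sup>+ y. ennreal (cmod (f y)) ^ 2 \<partial>M) * (\<integral>\<^sup>+ y. ennreal (cmod (g y)) ^ 2 \<partial>M)"
    by (rule Cauchy_Schwarz_nn_integral) auto
  also have "\<dots> \<le> ennreal Q * ennreal P"
    using f nn_integral_eq_integral[OF g] by (intro mult_mono) (auto simp: ennreal_power P_def)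
  finally have "(cmod (LINT y|M. f y * g y))^2 \<le> Q * P"
    using Q P by (simp add: ennreal_power ennreal_mult[symmetric])
  then show ?thesis
    using Q P by (simp add: real_le_rsqrt real_sqrt_mult[symmetric] P_def)
qed

lemma borel_measurable_Phi: "Phi k x \<in> borel_measurable (bdry_measure D)"
proof -
  have "Phi k x \<in> borel_measurable borel"
    unfolding Phi_def[abs_def] using borel_measurable_hankel1_0 by measurable
  then show ?thesis
    by (subst measurable_cong_sets[OF sets_bdry_measure refl]) (rule measurable_restrict_space1)
qed

lemma nn_integral_Phi_sq_le:
  fixes D :: "(real^2) set" and k0 :: real
  assumes D: "open D" and bounded: "bounded (frontier D)" and lip: "lipschitz_boundary D"
    and k0: "k0 > 0"
  shows "\<exists>K\<ge>0. \<forall>k\<ge>k0. \<forall>x\<in>D. (\<integral>\<^sup>+ y. ennreal ((cmod (Phi k x y))^2) \<partial>bdry_measure D)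
    \<le> ennreal (K * ln (1 + k * diameter (frontier D)) / k)"
proof -
  obtain c where "c \<ge> 0"
    and "\<And>x r. r > 0 \<Longrightarrow> emeasure (bdry_measure D) (frontier D \<inter> ball x r) \<le> ennreal (c * r)"
    using emeasure_bdry_measure_ball_le[OF D bounded lip] by blast
  moreover obtain A where "A \<ge> 0" "\<And>t. 0 < t \<Longrightarrow> t \<le> 1 \<Longrightarrow> (cmod (hankel1_0 t))^2 \<le> A / sqrt t"
    using hankel1_0_sq_le_small by blast
  moreover obtain B where "B \<ge> 0" "\<And>t. 1 \<le> t \<Longrightarrow> (cmod (hankel1_0 t))^2 \<le> B / t"
    using hankel1_0_sq_le_large by blast
  ultimately obtain K where K: "K \<ge> 0" and bound: "\<And>k x. k \<ge> k0 \<Longrightarrow> x \<notin> frontier D \<Longrightarrow>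
      (\<integral>\<^sup>+ y. ennreal ((cmod (hankel1_0 (k * dist x y)))^2) \<partial>bdry_measure D)
        \<le> ennreal (K * ln (1 + k * diameter (frontier D)) / k)"
    using nn_integral_dyadic_kernel_le_log[of "bdry_measure D" c A "\<lambda>t. (cmod (hankel1_0 t))^2" B k0]
      bounded k0 by (auto simp: sets_bdry_measure)
  have "(\<integral>\<^sup>+ y. ennreal ((cmod (Phi k x y))^2) \<partial>bdry_measure D)
      \<le> ennreal (K * ln (1 + k * diameter (frontier D)) / k)" if "k \<ge> k0" "x \<in> D" for k x
  proof -
    have "(cmod (Phi k x y))^2 \<le> (cmod (hankel1_0 (k * dist x y)))^2" for y
      by (simp add: Phi_def norm_mult dist_norm power_divide)
    then have "(\<integral>\<^sup>+ y. ennreal ((cmod (Phi k x y))^2) \<partial>bdry_measure D)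
        \<le> (\<integral>\<^sup>+ y. ennreal ((cmod (hankel1_0 (k * dist x y)))^2) \<partial>bdry_measure D)"
      by (intro nn_integral_mono ennreal_leI)
    also have "\<dots> \<le> ennreal (K * ln (1 + k * diameter (frontier D)) / k)"
      using that D by (intro bound) (auto simp: frontier_def interior_open)
    finally show ?thesis .
  qed
  with K show ?thesis by blast
qed

theorem lemma3p3:
  fixes D :: "(real^2) set" and k0 :: real
  assumes "open D" and "connected D" and "D \<noteq> {}"
    and "bounded (frontier D)" and "lipschitz_boundary D"
    and "k0 > 0"
  shows "\<exists>C>0. \<forall>k\<ge>k0. \<forall>\<phi>. in_L2_bdry D \<phi> \<longrightarrow>
           (\<forall>x\<in>D. cmod (single_layer D k \<phi> x)
              \<le> C * k powr (-1/2) * sqrt (ln (1 + k * diameter (frontier D))) * L2_norm_bdry D \<phi>)"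
proof -
  define lg where "lg k = ln (1 + k * diameter (frontier D))" for k
  obtain K where K: "K \<ge> 0" and kernel: "\<And>k x. k \<ge> k0 \<Longrightarrow> x \<in> D \<Longrightarrow>
      (\<integral>\<^sup>+ y. ennreal ((cmod (Phi k x y))^2) \<partial>bdry_measure D) \<le> ennreal (K * lg k / k)"
    using nn_integral_Phi_sq_le[OF assms(1,4,5,6)] unfolding lg_def by blast
  have "cmod (single_layer D k \<phi> x) \<le> (sqrt K + 1) * k powr (-1/2) * sqrt (lg k) * L2_norm_bdry D \<phi>"
    if k: "k \<ge> k0" and \<phi>: "in_L2_bdry D \<phi>" and x: "x \<in> D" for k \<phi> x
  proof -
    have "k > 0" "lg k \<ge> 0"
      using k assms(6) diameter_ge_0[OF assms(4)] by (auto simp: lg_def)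
    have "cmod (single_layer D k \<phi> x) \<le> sqrt (K * lg k / k) * L2_norm_bdry D \<phi>"
      unfolding single_layer_def L2_norm_bdry_def
      using \<phi> kernel[OF k x] K \<open>k > 0\<close> \<open>lg k \<ge> 0\<close>
      by (intro norm_integral_mult_le_sqrt borel_measurable_Phi) (auto simp: in_L2_bdry_def)
    also have "sqrt (K * lg k / k) = sqrt K * k powr (-1/2) * sqrt (lg k)"
      using \<open>k > 0\<close> by (simp add: real_sqrt_mult real_sqrt_divide powr_minus_divide powr_half_sqrt)
    also have "\<dots> * L2_norm_bdry D \<phi> \<le> (sqrt K + 1) * k powr (-1/2) * sqrt (lg k) * L2_norm_bdry D \<phi>"
      using \<open>lg k \<ge> 0\<close> by (intro mult_right_mono) (auto simp: L2_norm_bdry_def)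
    finally show ?thesis .
  qed
  moreover have "sqrt K + 1 > 0" using K by (simp add: add_nonneg_pos)
  ultimately show ?thesis unfolding lg_def by blast
qed

end
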